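(* $\varphi(I_n^{0,1})=\varphi(I_n^0)=\mathring{\mathcal{P}}_n$.
   Context: $B_n$ is the group of signed permutations $w=w_1\dots w_n$ of $[n]$ (bijections of $\{\pm1,\dots,\pm n\}$ with $w(-i)=-w(i)$), values ordered $\cdots<-2<-1<1<2<\cdots$, with $w_0=0$; $\mathrm{Des}(w)=\{i\in\{0,\dots,n-1\}: w_i>w_{i+1}\}$. For $J\subseteq\{0,\dots,n-1\}$, $X_J=\sum_{\mathrm{Des}(w)\subseteq J}w\in\mathbb{Q}B_n$. $I_n^0=\mathrm{span}\{X_J: 0\in J\}$ and $I_n^{0,1}=\mathrm{span}\{X_J: 0\in J \text{ or } 1\in J\}$. $\varphi:\mathbb{Q}B_n\to\mathbb{Q}\mathfrak{S}_n$ is the linear map forgetting signs, $w\mapsto|w_1|\dots|w_n|$. For $u\in\mathfrak{S}_n$, $\mathring{\mathrm{Peak}}(u)=\{i\in\{2,\dots,n-1\}: u_{i-1}<u_i>u_{i+1}\}$; $\mathring{\mathcal{F}}_n$ is the set of subsets of $\{2,\dots,n-1\}$ with no two consecutive integers; $\mathring{P}_F=\sum_{\mathring{\mathrm{Peak}}(u)=F}u$ and $\mathring{\mathcal{P}}_n=\mathrm{span}\{\mathring{P}_F: F\in\mathring{\mathcal{F}}_n\}$. *)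

theory Defs
  imports Complex_Main
begin

text \<open>A signed permutation w of [n] is represented by its window [w_1,...,w_n] (an int list);
  an ordinary permutation u of [n] by the int list [u_1,...,u_n].
  Elements of the group algebras QB_n, QS_n are functions int list => rat
  (coefficient of each basis element), supported on the respective group.\<close>

definition signed_perms :: "nat \<Rightarrow> int list set" where
  "signed_perms n = {w. length w = n \<and> set (map abs w) = {1..int n}}"

definition perms :: "nat \<Rightarrow> int list set" where
  "perms n = {u. length u = n \<and> set u = {1..int n}}"

text \<open>w_i with the convention w_0 = 0 (1-indexed).\<close>
definition wval :: "int list \<Rightarrow> nat \<Rightarrow> int" where
  "wval w i = (if i = 0 then 0 else w ! (i - 1))"

definition Des_B :: "int list \<Rightarrow> nat set" where
  "Des_B w = {i. i < length w \<and> wval w i > wval w (Suc i)}"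

definition X_B :: "nat \<Rightarrow> nat set \<Rightarrow> (int list \<Rightarrow> rat)" where
  "X_B n J = (\<lambda>w. if w \<in> signed_perms n \<and> Des_B w \<subseteq> J then 1 else 0)"

definition qspan :: "('a \<Rightarrow> rat) set \<Rightarrow> ('a \<Rightarrow> rat) set" where
  "qspan S = {v. \<exists>F c. finite F \<and> F \<subseteq> S \<and> v = (\<lambda>x. \<Sum>f\<in>F. c f * f x)}"

definition I0 :: "nat \<Rightarrow> (int list \<Rightarrow> rat) set" where
  "I0 n = qspan {X_B n J | J. J \<subseteq> {0..<n} \<and> 0 \<in> J}"

definition I01 :: "nat \<Rightarrow> (int list \<Rightarrow> rat) set" where
  "I01 n = qspan {X_B n J | J. J \<subseteq> {0..<n} \<and> (0 \<in> J \<or> 1 \<in> J)}"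

definition phi :: "nat \<Rightarrow> (int list \<Rightarrow> rat) \<Rightarrow> (int list \<Rightarrow> rat)" where
  "phi n f = (\<lambda>u. \<Sum>w\<in>{w \<in> signed_perms n. map abs w = u}. f w)"

text \<open>Interior peak set (1-indexed positions i in {2..n-1}).\<close>
definition int_peak :: "int list \<Rightarrow> nat set" where
  "int_peak u = {i. 2 \<le> i \<and> i + 1 \<le> length u \<and> u ! (i - 2) < u ! (i - 1) \<and> u ! (i - 1) > u ! i}"

definition int_peak_sets :: "nat \<Rightarrow> nat set set" where
  "int_peak_sets n = {F. F \<subseteq> {2..n - 1} \<and> (\<forall>i\<in>F. Suc i \<notin> F)}"

definition P_peak :: "nat \<Rightarrow> nat set \<Rightarrow> (int list \<Rightarrow> rat)" where
  "P_peak n F = (\<lambda>u. if u \<in> perms n \<and> int_peak u = F then 1 else 0)"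

definition peak_space :: "nat \<Rightarrow> (int list \<Rightarrow> rat) set" where
  "peak_space n = qspan {P_peak n F | F. F \<in> int_peak_sets n}"

end

theory Submission
  imports Defs "HOL-Library.Function_Algebras"
begin

text \<open>
  The fibre of \<open>\<phi>\<close> over a permutation \<open>u\<close> consists of the \<open>2^n\<close> ways of signing \<open>u\<close>.
  For \<open>i \<notin> J\<close>, requiring that \<open>i\<close> is not a descent fixes the sign of the larger of
  \<open>u\<^sub>i, u\<^sub>i\<^sub>+\<^sub>1\<close> (with \<open>u\<^sub>0 = 0\<close>), and two such requirements clash exactly when \<open>i, i+1 \<notin> J\<close>
  and \<open>u\<close> has a peak at \<open>i+1\<close>; position 1 behaves like a peak unless \<open>0 \<in> J\<close> or \<open>1 \<in> J\<close>.
  Hence \<open>\<phi>(X\<^sub>J)\<close> is \<open>2^|J|\<close> times the indicator of the permutations each of whose interior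
  peaks \<open>j\<close> has \<open>j-1 \<in> J\<close> or \<open>j \<in> J\<close>. This depends only on the peak set, so the image lies in
  the peak algebra. Conversely, for \<open>J\<close> the complement of \<open>B \<union> (B - 1)\<close>, inclusion-exclusion
  expresses these indicators unitriangularly (ordered by \<open>\<Sum>B\<close>) through the indicators of
  \<open>{u. B \<subseteq> Peak u}\<close>, and Moebius inversion over peak sets recovers every \<open>P\<^sub>F\<close>.
\<close>

lemma card_Pow_Int_eq:
  assumes "finite A" "Q \<subseteq> P" "P \<subseteq> A"
  shows "card {N \<in> Pow A. N \<inter> P = Q} = 2 ^ (card A - card P)"
proof -
  have "{N \<in> Pow A. N \<inter> P = Q} = (\<lambda>M. M \<union> Q) ` Pow (A - P)"
  proof (intro equalityI subsetI)
    fix N assume "N \<in> {N \<in> Pow A. N \<inter> P = Q}"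
    then have "N = (N - P) \<union> Q" "N - P \<in> Pow (A - P)" by auto
    then show "N \<in> (\<lambda>M. M \<union> Q) ` Pow (A - P)" by blast
  qed (use assms in auto)
  moreover have "inj_on (\<lambda>M. M \<union> Q) (Pow (A - P))"
    using assms(2) by (auto intro!: inj_onI)
  ultimately show ?thesis
    using assms by (simp add: card_image card_Pow card_Diff_subset finite_subset)
qed

lemma card_Pow_literals:
  assumes "finite A" "f ` S \<subseteq> A" "inj_on f S"
  shows "card {N \<in> Pow A. \<forall>i\<in>S. f i \<in> N \<longleftrightarrow> P i} = 2 ^ (card A - card S)"
proof -
  have "{N \<in> Pow A. \<forall>i\<in>S. f i \<in> N \<longleftrightarrow> P i} = {N \<in> Pow A. N \<inter> f ` S = f ` {i \<in> S. P i}}"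
    using inj_onD[OF assms(3)] by blast
  then show ?thesis
    using card_Pow_Int_eq[OF assms(1) _ assms(2), of "f ` {i \<in> S. P i}"] card_image[OF assms(3)]
    by auto
qed

lemma prod_of_bool_mem: "finite X \<Longrightarrow> (\<Prod>x\<in>X. of_bool (x \<in> F)) = (of_bool (X \<subseteq> F) :: 'a::comm_semiring_1)"
  by (induction X rule: finite_induct) auto

lemma of_bool_disjoint_eq_alternating_sum:
  fixes F T :: "'b set"
  assumes "finite T"
  shows "(of_bool (F \<inter> T = {}) :: 'a::comm_ring_1) = (\<Sum>C\<in>Pow T. (-1) ^ card C * of_bool (C \<subseteq> F))"
proof -
  have "(of_bool (F \<inter> T = {}) :: 'a) = (\<Prod>x\<in>T. of_bool (x \<in> - F))"
    by (subst prod_of_bool_mem[OF assms]) (auto intro!: arg_cong[where f = of_bool])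
  also have "\<dots> = (\<Prod>x\<in>T. 1 - of_bool (x \<in> F))"
    by (intro prod.cong) auto
  also have "\<dots> = (\<Sum>C\<in>Pow T. (-1) ^ card C * of_bool (C \<subseteq> F))"
    using prod_diff_conv_sum[OF assms, of "\<lambda>_. 1" "\<lambda>x. of_bool (x \<in> F)"]
    by (simp del: of_bool_eq add: prod_of_bool_mem finite_subset[OF _ assms])
  finally show ?thesis .
qed

interpretation rat_fun: module "\<lambda>c (f :: 'a \<Rightarrow> rat) x. c * f x"
  by unfold_locales (auto simp: fun_eq_iff algebra_simps)

lemma sum_apply: "(\<Sum>a\<in>A. f a) x = (\<Sum>a\<in>A. f a x)"
  by (induction A rule: infinite_finite_induct) auto

lemma qspan_eq_span: "qspan S = rat_fun.span S"
  unfolding qspan_def rat_fun.span_explicit by (auto simp: sum_apply fun_eq_iff)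

lemma phi_module_hom: "module_hom (\<lambda>c f x. c * f x) (\<lambda>c f x. c * f x) (phi n)"
  unfolding module_hom_iff
  by (auto simp: rat_fun.module_axioms phi_def fun_eq_iff sum.distrib sum_distrib_left)

lemma phi_image_span: "phi n ` rat_fun.span S = rat_fun.span (phi n ` S)"
  by (rule module_hom.span_image[OF phi_module_hom, symmetric])

section \<open>Fibres of the sign-forgetting map\<close>

lemma perms_D:
  assumes "u \<in> perms n"
  shows "length u = n" "distinct u" "\<And>k. k < n \<Longrightarrow> 0 < u ! k"
proof -
  show len: "length u = n" using assms by (simp add: perms_def)
  then show "distinct u" using assms by (simp add: perms_def card_distinct)
  show "0 < u ! k" if "k < n" for k
  proof -
    have "u ! k \<in> set u" using that len by simp
    then show ?thesis using assms by (auto simp: perms_def)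
  qed
qed

definition flip_signs :: "nat set \<Rightarrow> int list \<Rightarrow> int list" where
  "flip_signs N u = map (\<lambda>k. if k \<in> N then - (u ! k) else u ! k) [0..<length u]"

lemma length_flip_signs [simp]: "length (flip_signs N u) = length u"
  by (simp add: flip_signs_def)

lemma nth_flip_signs [simp]:
  "k < length u \<Longrightarrow> flip_signs N u ! k = (if k \<in> N then - (u ! k) else u ! k)"
  by (simp add: flip_signs_def)

lemma abs_flip_signs: "u \<in> perms n \<Longrightarrow> map abs (flip_signs N u) = u"
  by (rule nth_equalityI) (auto simp: perms_D less_imp_le)

lemma flip_signs_negatives:
  assumes "u \<in> perms n" "N \<subseteq> {0..<n}"
  shows "{k. k < n \<and> flip_signs N u ! k < 0} = N"
proof -
  have "flip_signs N u ! k < 0 \<longleftrightarrow> k \<in> N" if "k < n" for k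
    using perms_D(3)[OF assms(1) that] that perms_D(1)[OF assms(1)] by auto
  then show ?thesis using assms(2) by auto
qed

lemma inj_on_flip_signs: "u \<in> perms n \<Longrightarrow> inj_on (\<lambda>N. flip_signs N u) (Pow {0..<n})"
  by (rule inj_on_inverseI[where g = "\<lambda>w. {k. k < n \<and> w ! k < 0}"]) (simp add: flip_signs_negatives)

lemma signed_perms_fibre:
  assumes u: "u \<in> perms n"
  shows "{w \<in> signed_perms n. map abs w = u} = (\<lambda>N. flip_signs N u) ` Pow {0..<n}"
proof (intro equalityI subsetI)
  fix w assume "w \<in> {w \<in> signed_perms n. map abs w = u}"
  then have w: "length w = n" "map abs w = u" by (auto simp: signed_perms_def)
  have "u ! k = \<bar>w ! k\<bar>" if "k < n" for k
    using w that by auto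
  then have "w = flip_signs {k. k < n \<and> w ! k < 0} u"
    using w by (intro nth_equalityI) auto
  then show "w \<in> (\<lambda>N. flip_signs N u) ` Pow {0..<n}" by (rule image_eqI) auto
next
  fix w assume "w \<in> (\<lambda>N. flip_signs N u) ` Pow {0..<n}"
  then have "map abs w = u" using abs_flip_signs[OF u] by blast
  moreover have "length w = n" using calculation u by (metis length_map perms_D(1))
  ultimately show "w \<in> {w \<in> signed_perms n. map abs w = u}"
    using u unfolding signed_perms_def perms_def by (simp only: mem_Collect_eq)
qed

lemma phi_apply:
  assumes "u \<in> perms n"
  shows "phi n f u = (\<Sum>N\<in>Pow {0..<n}. f (flip_signs N u))"
  unfolding phi_def signed_perms_fibre[OF assms] by (simp add: sum.reindex inj_on_flip_signs[OF assms])

lemma phi_apply_not_perm: "u \<notin> perms n \<Longrightarrow> phi n f u = 0"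
  by (auto simp: phi_def signed_perms_def perms_def intro!: sum.neutral)

section \<open>Descents of signed permutations\<close>

lemma wval_pos: "u \<in> perms n \<Longrightarrow> 0 < k \<Longrightarrow> k \<le> n \<Longrightarrow> 0 < wval u k"
  by (simp add: wval_def perms_D(3))

lemma wval_0 [simp]: "wval u 0 = 0"
  by (simp add: wval_def)

lemma wval_Suc_neq:
  assumes "u \<in> perms n" "i < n"
  shows "wval u i \<noteq> wval u (Suc i)"
proof (cases i)
  case 0
  then show ?thesis using wval_pos[OF assms(1), of 1] assms(2) by simp
next
  case (Suc k)
  then show ?thesis using assms perms_D(1,2)[OF assms(1)] by (simp add: wval_def nth_eq_iff_index_eq)
qed

lemma wval_flip_signs:
  "0 < k \<Longrightarrow> k \<le> length u \<Longrightarrow> wval (flip_signs N u) k = (if k - 1 \<in> N then - wval u k else wval u k)"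
  by (simp add: wval_def)

lemma zero_notin_Des_B: "u \<in> perms n \<Longrightarrow> 0 \<notin> Des_B u"
  using wval_pos[of u n 1] by (auto simp: Des_B_def perms_D(1) wval_def)

text \<open>For a permutation \<open>u\<close> padded with \<open>u\<^sub>0 = 0\<close>, the list index of the larger of the entries at
  positions \<open>i\<close> and \<open>i + 1\<close> (at \<open>i = 0\<close> both branches give 0). Whether \<open>i\<close> is a descent of
  \<open>flip_signs N u\<close> depends only on the sign of this entry.\<close>

definition larger_pos :: "int list \<Rightarrow> nat \<Rightarrow> nat" where
  "larger_pos u i = (if wval u i < wval u (Suc i) then i else i - 1)"

lemma notin_Des_B_flip_signs_iff:
  assumes u: "u \<in> perms n" and i: "i < n"
  shows "i \<notin> Des_B (flip_signs N u) \<longleftrightarrow> (larger_pos u i \<in> N \<longleftrightarrow> i \<in> Des_B u)"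
proof (cases "i = 0")
  case True
  then show ?thesis
    using u i wval_pos[OF u, of 1] zero_notin_Des_B[OF u]
    by (auto simp: Des_B_def larger_pos_def wval_flip_signs perms_D(1) wval_def)
next
  case False
  then show ?thesis
    using u i wval_pos[OF u, of i] wval_pos[OF u, of "Suc i"] wval_Suc_neq[OF u i]
    by (auto simp: Des_B_def larger_pos_def wval_flip_signs perms_D(1))
qed

lemma Des_B_flip_signs_subset_iff:
  assumes "u \<in> perms n"
  shows "Des_B (flip_signs N u) \<subseteq> J \<longleftrightarrow> (\<forall>i\<in>{0..<n} - J. larger_pos u i \<in> N \<longleftrightarrow> i \<in> Des_B u)"
proof -
  have "Des_B (flip_signs N u) \<subseteq> {0..<n}"
    by (auto simp: Des_B_def perms_D(1)[OF assms])
  then have "Des_B (flip_signs N u) \<subseteq> J \<longleftrightarrow> (\<forall>i\<in>{0..<n} - J. i \<notin> Des_B (flip_signs N u))"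
    by auto
  also have "\<dots> \<longleftrightarrow> (\<forall>i\<in>{0..<n} - J. larger_pos u i \<in> N \<longleftrightarrow> i \<in> Des_B u)"
    using notin_Des_B_flip_signs_iff[OF assms] by auto
  finally show ?thesis .
qed

lemma larger_pos_less: "Suc i < i' \<Longrightarrow> larger_pos u i < larger_pos u i'"
  by (auto simp: larger_pos_def)

lemma larger_pos_eq_Suc_iff:
  assumes u: "u \<in> perms n" and i: "Suc i < n"
  shows "larger_pos u i = larger_pos u (Suc i) \<longleftrightarrow> i \<notin> Des_B u \<and> Suc i \<in> Des_B u"
  using i wval_Suc_neq[OF u, of i] wval_Suc_neq[OF u i] wval_pos[OF u, of 1]
  by (cases "i = 0") (auto simp: larger_pos_def Des_B_def perms_D(1)[OF u])

lemma Suc_in_int_peak_iff: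
  assumes u: "u \<in> perms n" and i: "0 < i" "Suc i < n"
  shows "Suc i \<in> int_peak u \<longleftrightarrow> i \<notin> Des_B u \<and> Suc i \<in> Des_B u"
  using i wval_Suc_neq[OF u, of i]
  by (auto simp: int_peak_def Des_B_def wval_def perms_D(1)[OF u] numeral_2_eq_2)

lemma int_peak_in_int_peak_sets: "u \<in> perms n \<Longrightarrow> int_peak u \<in> int_peak_sets n"
  by (auto simp: int_peak_def int_peak_sets_def perms_D(1))

lemma phi_X_B_apply_card:
  assumes "u \<in> perms n"
  shows "phi n (X_B n J) u
    = of_nat (card {N \<in> Pow {0..<n}. \<forall>i\<in>{0..<n} - J. larger_pos u i \<in> N \<longleftrightarrow> i \<in> Des_B u})"
proof -
  have "flip_signs N u \<in> signed_perms n" if "N \<in> Pow {0..<n}" for N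
    using signed_perms_fibre[OF assms] that by blast
  then show ?thesis
    unfolding phi_apply[OF assms] X_B_def Des_B_flip_signs_subset_iff[OF assms]
    by (simp add: sum.If_cases Int_def)
qed

lemma inj_on_larger_pos:
  assumes u: "u \<in> perms n" and J: "0 \<in> J \<or> 1 \<in> J" and covered: "\<forall>j\<in>int_peak u. j - 1 \<in> J \<or> j \<in> J"
  shows "inj_on (larger_pos u) ({0..<n} - J)"
proof (rule linorder_inj_onI')
  fix i i' assume i: "i \<in> {0..<n} - J" "i' \<in> {0..<n} - J" "i < i'"
  show "larger_pos u i \<noteq> larger_pos u i'"
  proof (cases "i' = Suc i")
    case True
    have "i \<noteq> 0"
    proof
      assume "i = 0"
      then show False using i(1,2) J True by simp
    qed
    moreover have "Suc i \<notin> int_peak u"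
      using covered i True by auto
    ultimately show ?thesis
      using i True larger_pos_eq_Suc_iff[OF u] Suc_in_int_peak_iff[OF u] by auto
  next
    case False
    then show ?thesis using i larger_pos_less[of i i' u] by simp
  qed
qed

lemma uncovered_peak_conflict:
  assumes u: "u \<in> perms n" and j: "j \<in> int_peak u" "j - 1 \<notin> J" "j \<notin> J"
  shows "{N \<in> Pow {0..<n}. \<forall>i\<in>{0..<n} - J. larger_pos u i \<in> N \<longleftrightarrow> i \<in> Des_B u} = {}"
proof -
  have "j \<in> {2..n - 1}"
    using j(1) int_peak_in_int_peak_sets[OF u] by (auto simp: int_peak_sets_def)
  then obtain i where i: "j = Suc i" "0 < i" "Suc i < n"
    by (intro that[of "j - 1"]) auto
  then have conflict: "i \<in> {0..<n} - J" "Suc i \<in> {0..<n} - J" "i \<notin> Des_B u" "Suc i \<in> Des_B u"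
    "larger_pos u i = larger_pos u (Suc i)"
    using j Suc_in_int_peak_iff[OF u] larger_pos_eq_Suc_iff[OF u] by auto
  show ?thesis
  proof (rule equals0I)
    fix N assume "N \<in> {N \<in> Pow {0..<n}. \<forall>i\<in>{0..<n} - J. larger_pos u i \<in> N \<longleftrightarrow> i \<in> Des_B u}"
    then have "larger_pos u i \<notin> N" "larger_pos u (Suc i) \<in> N"
      using conflict(1-4) by auto
    then show False using conflict(5) by simp
  qed
qed

lemma phi_X_B_apply:
  assumes u: "u \<in> perms n" and J: "J \<subseteq> {0..<n}" "0 \<in> J \<or> 1 \<in> J"
  shows "phi n (X_B n J) u = (if \<forall>j\<in>int_peak u. j - 1 \<in> J \<or> j \<in> J then 2 ^ card J else 0)"
proof (cases "\<forall>j\<in>int_peak u. j - 1 \<in> J \<or> j \<in> J")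
  case True
  have "larger_pos u ` ({0..<n} - J) \<subseteq> {0..<n}"
    by (auto simp: larger_pos_def)
  moreover have "n - card ({0..<n} - J) = card J"
    using J(1) card_mono[OF _ J(1)] by (simp add: card_Diff_subset finite_subset)
  ultimately show ?thesis
    using True card_Pow_literals[of "{0..<n}" "larger_pos u" "{0..<n} - J"]
    by (simp add: phi_X_B_apply_card[OF u] inj_on_larger_pos[OF u J(2) True])
next
  case False
  then obtain j where "j \<in> int_peak u" "j - 1 \<notin> J" "j \<notin> J" by blast
  then have "{N \<in> Pow {0..<n}. \<forall>i\<in>{0..<n} - J. larger_pos u i \<in> N \<longleftrightarrow> i \<in> Des_B u} = {}"
    by (rule uncovered_peak_conflict[OF u])
  then show ?thesis
    unfolding phi_X_B_apply_card[OF u] if_not_P[OF False] by simp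
qed

section \<open>The image of the descent classes\<close>

definition covered_peaks_ind :: "nat \<Rightarrow> nat set \<Rightarrow> int list \<Rightarrow> rat" where
  "covered_peaks_ind n J u = of_bool (u \<in> perms n \<and> (\<forall>j\<in>int_peak u. j - 1 \<in> J \<or> j \<in> J))"

lemma phi_X_B_eq:
  assumes "J \<subseteq> {0..<n}" "0 \<in> J \<or> 1 \<in> J"
  shows "phi n (X_B n J) = (\<lambda>u. 2 ^ card J * covered_peaks_ind n J u)"
proof
  fix u
  show "phi n (X_B n J) u = 2 ^ card J * covered_peaks_ind n J u"
    by (cases "u \<in> perms n") (simp_all add: covered_peaks_ind_def phi_X_B_apply[OF _ assms] phi_apply_not_perm)
qed

lemma span_phi_X_B:
  assumes "\<And>J. P J \<Longrightarrow> 0 \<in> J \<or> 1 \<in> J"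
  shows "rat_fun.span (phi n ` {X_B n J | J. J \<subseteq> {0..<n} \<and> P J})
    = rat_fun.span {covered_peaks_ind n J | J. J \<subseteq> {0..<n} \<and> P J}"
proof (unfold rat_fun.span_eq, intro conjI subsetI)
  fix f assume "f \<in> phi n ` {X_B n J | J. J \<subseteq> {0..<n} \<and> P J}"
  then obtain J where J: "J \<subseteq> {0..<n}" "P J" and f: "f = (\<lambda>u. 2 ^ card J * covered_peaks_ind n J u)"
    using phi_X_B_eq assms by blast
  show "f \<in> rat_fun.span {covered_peaks_ind n J | J. J \<subseteq> {0..<n} \<and> P J}"
    unfolding f using J by (intro rat_fun.span_scale rat_fun.span_base) blast
next
  fix f assume "f \<in> {covered_peaks_ind n J | J. J \<subseteq> {0..<n} \<and> P J}"
  then obtain J where J: "J \<subseteq> {0..<n}" "P J" and f: "f = covered_peaks_ind n J"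
    by blast
  have "(\<lambda>u. 1 / 2 ^ card J * phi n (X_B n J) u) \<in> rat_fun.span (phi n ` {X_B n J | J. J \<subseteq> {0..<n} \<and> P J})"
    using J by (intro rat_fun.span_scale rat_fun.span_base) blast
  then show "f \<in> rat_fun.span (phi n ` {X_B n J | J. J \<subseteq> {0..<n} \<and> P J})"
    using phi_X_B_eq[OF J(1) assms[OF J(2)]] by (simp add: f)
qed

lemma finite_int_peak_sets: "finite (int_peak_sets n)"
  by (rule finite_subset[of _ "Pow {2..n - 1}"]) (auto simp: int_peak_sets_def)

lemma sum_P_peak_apply:
  "finite A \<Longrightarrow> (\<Sum>F\<in>A. P_peak n F) u = of_bool (u \<in> perms n \<and> int_peak u \<in> A)"
  by (cases "u \<in> perms n") (simp_all add: sum_apply P_peak_def)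

lemma peak_space_eq_span: "peak_space n = rat_fun.span {P_peak n F | F. F \<in> int_peak_sets n}"
  by (simp add: peak_space_def qspan_eq_span)

lemma peak_statistic_in_peak_space:
  "(\<lambda>u. of_bool (u \<in> perms n \<and> Q (int_peak u))) \<in> peak_space n"
proof -
  define A where "A = {F \<in> int_peak_sets n. Q F}"
  have "finite A" by (simp add: A_def finite_int_peak_sets)
  then have "(\<lambda>u. of_bool (u \<in> perms n \<and> Q (int_peak u))) = (\<Sum>F\<in>A. P_peak n F)"
    by (auto simp: sum_P_peak_apply A_def int_peak_in_int_peak_sets)
  also have "\<dots> \<in> peak_space n"
    unfolding peak_space_eq_span A_def by (intro rat_fun.span_sum rat_fun.span_base) blast
  finally show ?thesis .
qed

lemma covered_peaks_ind_in_peak_space: "covered_peaks_ind n J \<in> peak_space n"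
  unfolding covered_peaks_ind_def[abs_def] by (rule peak_statistic_in_peak_space)

lemma subspace_peak_space: "rat_fun.subspace (peak_space n)"
  by (simp add: peak_space_eq_span)

section \<open>Peak functions from indicators of covered peaks\<close>

definition peak_closure :: "nat set \<Rightarrow> nat set" where
  "peak_closure B = B \<union> {Suc j | j. j \<in> B \<and> Suc (Suc j) \<in> B}"

definition contains_peaks_ind :: "nat \<Rightarrow> nat set \<Rightarrow> int list \<Rightarrow> rat" where
  "contains_peaks_ind n B u = of_bool (u \<in> perms n \<and> B \<subseteq> int_peak u)"

lemma finite_peak_closure: "finite B \<Longrightarrow> finite (peak_closure B)"
  by (simp add: peak_closure_def)

lemma peak_closure_subset:
  assumes "B \<in> int_peak_sets n"
  shows "peak_closure B \<subseteq> {2..n - 1}"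
  using assms by (fastforce simp: peak_closure_def int_peak_sets_def)

lemma covered_peaks_ind_peak_closure:
  "covered_peaks_ind n ({0..<n} - (B \<union> {j. Suc j \<in> B}))
    = (\<lambda>u. of_bool (u \<in> perms n \<and> int_peak u \<inter> peak_closure B = {}))"
proof
  fix u
  have "(j - 1 \<in> {0..<n} - (B \<union> {j. Suc j \<in> B}) \<or> j \<in> {0..<n} - (B \<union> {j. Suc j \<in> B}))
      \<longleftrightarrow> j \<notin> peak_closure B" if "u \<in> perms n" "j \<in> int_peak u" for j
  proof -
    have "j \<in> {2..n - 1}"
      using that int_peak_in_int_peak_sets[of u n] by (auto simp: int_peak_sets_def)
    then show ?thesis by (cases j) (auto simp: peak_closure_def)
  qed
  then have "(u \<in> perms n \<and> (\<forall>j\<in>int_peak u. j - 1 \<in> {0..<n} - (B \<union> {j. Suc j \<in> B})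
        \<or> j \<in> {0..<n} - (B \<union> {j. Suc j \<in> B})))
      \<longleftrightarrow> (u \<in> perms n \<and> int_peak u \<inter> peak_closure B = {})"
    by blast
  then show "covered_peaks_ind n ({0..<n} - (B \<union> {j. Suc j \<in> B})) u
      = of_bool (u \<in> perms n \<and> int_peak u \<inter> peak_closure B = {})"
    unfolding covered_peaks_ind_def by (rule arg_cong)
qed

lemma covered_peaks_ind_inclusion_exclusion:
  assumes "finite B"
  shows "covered_peaks_ind n ({0..<n} - (B \<union> {j. Suc j \<in> B}))
    = (\<Sum>C\<in>Pow (peak_closure B). (\<lambda>u. (-1) ^ card C * contains_peaks_ind n C u))"
proof
  fix u
  show "covered_peaks_ind n ({0..<n} - (B \<union> {j. Suc j \<in> B})) u
      = (\<Sum>C\<in>Pow (peak_closure B). (\<lambda>u. (-1) ^ card C * contains_peaks_ind n C u)) u"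
    using of_bool_disjoint_eq_alternating_sum[OF finite_peak_closure[OF assms], of "int_peak u"]
    by (cases "u \<in> perms n") (simp_all add: covered_peaks_ind_peak_closure sum_apply contains_peaks_ind_def)
qed

lemma contains_peaks_ind_adjacent:
  assumes "i \<in> C" "Suc i \<in> C"
  shows "contains_peaks_ind n C = 0"
proof
  fix u
  have "\<not> (u \<in> perms n \<and> C \<subseteq> int_peak u)"
    using assms int_peak_in_int_peak_sets[of u n] by (auto simp: int_peak_sets_def)
  then show "contains_peaks_ind n C u = 0 u"
    by (simp add: contains_peaks_ind_def)
qed

lemma sum_less_of_subset_peak_closure:
  assumes B: "finite B" "0 \<notin> B" and C: "C \<subseteq> peak_closure B" "\<forall>i\<in>C. Suc i \<notin> C" "C \<noteq> B"
  shows "\<Sum>C < \<Sum>B"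
proof -
  define f where "f c = (if c \<in> B then c else Suc c)" for c
  have f_B: "f ` C \<subseteq> B"
    using C(1) by (auto simp: f_def peak_closure_def)
  have f_inj: "inj_on f C"
    using C(2) by (auto intro!: inj_onI simp: f_def split: if_splits)
  have fin: "finite C"
    using C(1) finite_peak_closure[OF B(1)] by (rule finite_subset)
  have le: "sum f C \<le> \<Sum>B"
  proof -
    have "sum f C = \<Sum>(f ` C)"
      by (simp add: sum.reindex[OF f_inj])
    also have "\<dots> \<le> \<Sum>B"
      using f_B B(1) by (intro sum_mono2) auto
    finally show ?thesis .
  qed
  show ?thesis
  proof (cases "C \<subseteq> B")
    case True
    then obtain b where b: "b \<in> B" "b \<notin> C" using C(3) by blast
    have "\<Sum>C \<le> \<Sum>(B - {b})"
      using True b B(1) by (intro sum_mono2) auto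
    also have "\<dots> < \<Sum>B"
      using sum.remove[OF B(1) b(1), of id] b(1) B(2) by (cases b) auto
    finally show ?thesis .
  next
    case False
    then obtain c where "c \<in> C" "c \<notin> B" by blast
    then have "\<Sum>C < sum f C"
      using fin by (intro sum_strict_mono_ex1) (auto simp: f_def)
    then show ?thesis using le by simp
  qed
qed

lemma contains_peaks_ind_in_span:
  assumes "1 \<le> n" "B \<in> int_peak_sets n"
  shows "contains_peaks_ind n B \<in> rat_fun.span {covered_peaks_ind n J | J. J \<subseteq> {0..<n} \<and> 0 \<in> J}"
  using assms(2)
proof (induction "\<Sum>B" arbitrary: B rule: less_induct)
  case less
  let ?W = "rat_fun.span {covered_peaks_ind n J | J. J \<subseteq> {0..<n} \<and> 0 \<in> J}"
  let ?term = "\<lambda>C u. (-1) ^ card C * contains_peaks_ind n C u"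
  have B: "finite B" "B \<subseteq> {2..n - 1}"
    using less.prems finite_subset by (auto simp: int_peak_sets_def)
  have fin: "finite (Pow (peak_closure B))"
    using finite_peak_closure[OF B(1)] by simp
  have B_in: "B \<in> Pow (peak_closure B)"
    by (auto simp: peak_closure_def)
  have "covered_peaks_ind n ({0..<n} - (B \<union> {j. Suc j \<in> B})) \<in> ?W"
    using assms(1) B(2) by (intro rat_fun.span_base) force
  moreover have "(\<Sum>C\<in>Pow (peak_closure B) - {B}. ?term C) \<in> ?W"
  proof (intro rat_fun.span_sum rat_fun.span_scale)
    fix C assume C: "C \<in> Pow (peak_closure B) - {B}"
    show "contains_peaks_ind n C \<in> ?W"
    proof (cases "\<exists>i\<in>C. Suc i \<in> C")
      case True
      then obtain i where "i \<in> C" "Suc i \<in> C" by blast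
      then show ?thesis by (simp add: contains_peaks_ind_adjacent rat_fun.span_zero)
    next
      case False
      have "\<Sum>C < \<Sum>B"
        using C False B by (intro sum_less_of_subset_peak_closure) auto
      moreover have "C \<in> int_peak_sets n"
        using C False peak_closure_subset[OF less.prems] by (auto simp: int_peak_sets_def)
      ultimately show ?thesis by (rule less.hyps)
    qed
  qed
  ultimately have "covered_peaks_ind n ({0..<n} - (B \<union> {j. Suc j \<in> B}))
      - (\<Sum>C\<in>Pow (peak_closure B) - {B}. ?term C) \<in> ?W"
    by (rule rat_fun.span_diff)
  also have "covered_peaks_ind n ({0..<n} - (B \<union> {j. Suc j \<in> B}))
      - (\<Sum>C\<in>Pow (peak_closure B) - {B}. ?term C) = ?term B"
    unfolding covered_peaks_ind_inclusion_exclusion[OF B(1)] sum.remove[OF fin B_in] by simp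
  finally have "(\<lambda>u. (-1) ^ card B * ?term B u) \<in> ?W"
    by (rule rat_fun.span_scale)
  then show ?case by simp
qed

lemma P_peak_in_span:
  assumes "1 \<le> n" "A \<in> int_peak_sets n"
  shows "P_peak n A \<in> rat_fun.span {covered_peaks_ind n J | J. J \<subseteq> {0..<n} \<and> 0 \<in> J}"
  using assms(2)
proof (induction "n - card A" arbitrary: A rule: less_induct)
  case less
  let ?W = "rat_fun.span {covered_peaks_ind n J | J. J \<subseteq> {0..<n} \<and> 0 \<in> J}"
  define Up where "Up = {F \<in> int_peak_sets n. A \<subseteq> F}"
  have fin: "finite Up"
    by (simp add: Up_def finite_int_peak_sets)
  have A_in: "A \<in> Up"
    using less.prems by (simp add: Up_def)
  have "contains_peaks_ind n A = (\<Sum>F\<in>Up. P_peak n F)"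
  proof
    fix u
    show "contains_peaks_ind n A u = (\<Sum>F\<in>Up. P_peak n F) u"
      unfolding sum_P_peak_apply[OF fin]
      by (auto simp: Up_def contains_peaks_ind_def int_peak_in_int_peak_sets)
  qed
  then have "P_peak n A = contains_peaks_ind n A - (\<Sum>F\<in>Up - {A}. P_peak n F)"
    by (simp add: sum.remove[OF fin A_in])
  also have "\<dots> \<in> ?W"
  proof (intro rat_fun.span_diff rat_fun.span_sum)
    show "contains_peaks_ind n A \<in> ?W"
      using assms(1) less.prems by (rule contains_peaks_ind_in_span)
  next
    fix F assume "F \<in> Up - {A}"
    then have F: "F \<in> int_peak_sets n" "A \<subset> F"
      by (auto simp: Up_def)
    then have "F \<subseteq> {2..n - 1}"
      by (simp add: int_peak_sets_def)
    then have "F \<subseteq> {0..<n}"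
      by fastforce
    then have "card A < card F" "card F \<le> n"
      using psubset_card_mono[OF finite_subset F(2)] card_mono[of "{0..<n}" F] by auto
    then have "n - card F < n - card A"
      by linarith
    then show "P_peak n F \<in> ?W"
      using less.hyps F(1) by blast
  qed
  finally show ?case .
qed

theorem theorem5p9:
  fixes n :: nat
  assumes "n \<ge> 1"
  shows "phi n ` I01 n = peak_space n \<and> phi n ` I0 n = peak_space n"
proof -
  let ?W = "\<lambda>P. rat_fun.span {covered_peaks_ind n J | J. J \<subseteq> {0..<n} \<and> P J}"
  have I01: "phi n ` I01 n = ?W (\<lambda>J. 0 \<in> J \<or> 1 \<in> J)"
    unfolding I01_def qspan_eq_span phi_image_span by (rule span_phi_X_B)
  have I0: "phi n ` I0 n = ?W (\<lambda>J. 0 \<in> J)"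
    unfolding I0_def qspan_eq_span phi_image_span by (rule span_phi_X_B) simp
  have "?W (\<lambda>J. 0 \<in> J \<or> 1 \<in> J) \<subseteq> peak_space n"
    by (intro rat_fun.span_minimal subspace_peak_space) (auto intro: covered_peaks_ind_in_peak_space)
  moreover have "peak_space n \<subseteq> ?W (\<lambda>J. 0 \<in> J)"
    unfolding peak_space_eq_span
    by (intro rat_fun.span_minimal) (auto intro: P_peak_in_span[OF assms])
  moreover have "?W (\<lambda>J. 0 \<in> J) \<subseteq> ?W (\<lambda>J. 0 \<in> J \<or> 1 \<in> J)"
    by (intro rat_fun.span_mono) blast
  ultimately show ?thesis
    unfolding I01 I0 by blast
qed

end
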